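(* Let $G$ be a finite Abelian group of odd cardinality. Then $\mathrm{ms}_r(G)=\widetilde{\mathrm{ms}}_r(G)>\frac{1}{r^2}$ for every integer $r\ge 2$.
   Context: $G$ is written additively and carries its normalized counting (Haar) measure $\mu(A)=|A|/|G|$. For $A\subset G$ let $\mathrm{ms}(A)=\max_{c\in G}\mu(A\cap(2c-A))$ (symmetry with respect to central symmetries $x\mapsto 2c-x$) and $\widetilde{\mathrm{ms}}(A)=\max_{c\in G}\mu(A\cap(c-A))$ (symmetry with respect to quasi-central symmetries $x\mapsto c-x$). For an integer $r\ge1$, $\mathrm{ms}_r(G)=\min_\chi\max_{i<r}\mathrm{ms}(\chi^{-1}(i))$ and $\widetilde{\mathrm{ms}}_r(G)=\min_\chi\max_{i<r}\widetilde{\mathrm{ms}}(\chi^{-1}(i))$, the minima over all colorings $\chi:G\to\{0,\dots,r-1\}$. *)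

theory Defs
  imports Complex_Main
begin

definition mu :: "'a::{ab_group_add,finite} set \<Rightarrow> real" where
  "mu A = real (card A) / real (card (UNIV :: 'a set))"

definition ms :: "'a::{ab_group_add,finite} set \<Rightarrow> real" where
  "ms A = Max ((\<lambda>c. mu (A \<inter> (\<lambda>a. (c + c) - a) ` A)) ` UNIV)"

definition ms_tilde :: "'a::{ab_group_add,finite} set \<Rightarrow> real" where
  "ms_tilde A = Max ((\<lambda>c. mu (A \<inter> (\<lambda>a. c - a) ` A)) ` UNIV)"

definition colorings :: "nat \<Rightarrow> ('a::{ab_group_add,finite} \<Rightarrow> nat) set" where
  "colorings r = {\<chi>. \<forall>x. \<chi> x < r}"

definition ms_r :: "nat \<Rightarrow> 'a::{ab_group_add,finite} itself \<Rightarrow> real" where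
  "ms_r r G = Min ((\<lambda>\<chi>::'a \<Rightarrow> nat. Max ((\<lambda>i. ms (\<chi> -` {i})) ` {..<r})) ` colorings r)"

definition ms_tilde_r :: "nat \<Rightarrow> 'a::{ab_group_add,finite} itself \<Rightarrow> real" where
  "ms_tilde_r r G = Min ((\<lambda>\<chi>::'a \<Rightarrow> nat. Max ((\<lambda>i. ms_tilde (\<chi> -` {i})) ` {..<r})) ` colorings r)"

end

theory Submission
  imports Defs "HOL-Library.FuncSet"
begin

text \<open>
  In a group of odd order no element has order two, so doubling is a bijection and the central
  symmetries \<open>x \<mapsto> 2c - x\<close> are exactly the quasi-central ones; hence \<open>ms = ms_tilde\<close>.
  Given an \<open>r\<close>-colouring, some colour class \<open>A\<close> has \<open>|A| \<ge> |G|/r\<close>. The overlaps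
  \<open>|A \<inter> (c - A)|\<close> sum to \<open>|A|\<^sup>2\<close> over \<open>c \<in> G\<close>, so one of them is at least \<open>|G|/r\<^sup>2\<close>,
  and equality throughout would make all overlaps equal. But \<open>x \<mapsto> 2c - x\<close> is an involution of
  \<open>A \<inter> (2c - A)\<close> whose only possible fixed point is \<open>c\<close>, so this overlap is odd exactly when
  \<open>c \<in> A\<close>, and the overlaps at \<open>2a\<close>, \<open>a \<in> A\<close>, and \<open>2b\<close>, \<open>b \<notin> A\<close>, differ.
\<close>

lemma even_card_iff_even_card_fixpoints:
  assumes "finite S" "\<And>x. x \<in> S \<Longrightarrow> s x \<in> S" "\<And>x. x \<in> S \<Longrightarrow> s (s x) = x"
  shows "even (card S) \<longleftrightarrow> even (card {x\<in>S. s x = x})"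
  using assms
proof (induction "card S" arbitrary: S rule: less_induct)
  case less
  show ?case
  proof (cases "\<exists>x\<in>S. s x \<noteq> x")
    case False
    then have "{x\<in>S. s x = x} = S" by auto
    then show ?thesis by simp
  next
    case True
    then obtain x where x: "x \<in> S" "s x \<noteq> x" by auto
    define T where "T = S - {x, s x}"
    have pair: "{x, s x} \<subseteq> S" "card {x, s x} = 2" using x less.prems by auto
    then have card_S: "card S = card T + 2"
      unfolding T_def using card_Diff_subset[OF _ pair(1)] card_mono[OF less.prems(1) pair(1)] by auto
    have "even (card T) \<longleftrightarrow> even (card {y\<in>T. s y = y})"
    proof (rule less.hyps)
      show "card T < card S" using card_S by simp
      show "finite T" unfolding T_def using less.prems(1) by simp
      show "s y \<in> T" if "y \<in> T" for y
      proof -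
        have y: "y \<in> S" "y \<noteq> x" "y \<noteq> s x" using that unfolding T_def by auto
        have "s (s y) = y" "s (s x) = x" using less.prems(3) y(1) x(1) by auto
        then have "s y \<noteq> x" "s y \<noteq> s x" using y by metis+
        then show ?thesis unfolding T_def using less.prems(2)[OF y(1)] by auto
      qed
      show "s (s y) = y" if "y \<in> T" for y using that less.prems(3) unfolding T_def by auto
    qed
    moreover have "{y\<in>T. s y = y} = {y\<in>S. s y = y}" unfolding T_def using x less.prems by auto
    ultimately show ?thesis using card_S by simp
  qed
qed

lemma odd_card_UNIV_double_eq_zero:
  fixes x :: "'a::{ab_group_add,finite}"
  assumes "odd (card (UNIV :: 'a set))" and "x + x = 0"
  shows "x = 0"
proof (rule ccontr)
  assume "x \<noteq> 0"
  \<comment> \<open>Then translation by \<open>x\<close> is a fixed-point-free involution of the group.\<close>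
  have "{y. y + x = y} = {}" using \<open>x \<noteq> 0\<close> by auto
  moreover have "even (card (UNIV :: 'a set)) \<longleftrightarrow> even (card {y. y + x = y})"
    using even_card_iff_even_card_fixpoints[of UNIV "\<lambda>y. y + x"] assms(2)
    by (simp add: add.assoc)
  ultimately show False using assms(1) by simp
qed

lemma inj_double_odd_card_UNIV:
  assumes "odd (card (UNIV :: 'a::{ab_group_add,finite} set))"
  shows "inj (\<lambda>c::'a. c + c)"
proof (rule injI)
  fix c d :: 'a
  assume "c + c = d + d"
  then have "(c - d) + (c - d) = 0" by (simp add: algebra_simps)
  then have "c - d = 0" by (rule odd_card_UNIV_double_eq_zero[OF assms])
  then show "c = d" by simp
qed

lemma ms_eq_ms_tilde:
  assumes "odd (card (UNIV :: 'a::{ab_group_add,finite} set))"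
  shows "ms (A :: 'a set) = ms_tilde A"
proof -
  have "(\<lambda>c. mu (A \<inter> (\<lambda>a. (c + c) - a) ` A)) ` UNIV
      = (\<lambda>c. mu (A \<inter> (\<lambda>a. c - a) ` A)) ` range (\<lambda>c::'a. c + c)"
    by (simp add: image_image)
  also have "range (\<lambda>c::'a. c + c) = UNIV"
    using finite_UNIV_inj_surj[OF _ inj_double_odd_card_UNIV[OF assms]] by simp
  finally show ?thesis unfolding ms_def ms_tilde_def by simp
qed

lemma inter_reflection_eq:
  fixes A :: "'a::ab_group_add set"
  shows "A \<inter> (\<lambda>a. c - a) ` A = {a \<in> A. c - a \<in> A}"
proof (intro equalityI subsetI)
  fix x assume "x \<in> {a \<in> A. c - a \<in> A}"
  then have "x \<in> A" "c - x \<in> A" by simp_all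
  moreover have "x = c - (c - x)" by simp
  ultimately show "x \<in> A \<inter> (\<lambda>a. c - a) ` A" by (blast intro: rev_image_eqI)
qed auto

lemma sum_card_inter_reflection:
  fixes A :: "'a::{ab_group_add,finite} set"
  shows "(\<Sum>c\<in>UNIV. card (A \<inter> (\<lambda>a. c - a) ` A)) = card A * card A"
proof -
  have "bij_betw (\<lambda>a. (a, c - a)) {a \<in> A. c - a \<in> A} {p \<in> A \<times> A. fst p + snd p = c}" for c
  proof (rule bij_betwI[where g = fst])
    show "(\<lambda>a. (a, c - a)) \<in> {a \<in> A. c - a \<in> A} \<rightarrow> {p \<in> A \<times> A. fst p + snd p = c}" by auto
    show "fst \<in> {p \<in> A \<times> A. fst p + snd p = c} \<rightarrow> {a \<in> A. c - a \<in> A}"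
      by (auto simp: eq_diff_eq')
    show "(fst p, c - fst p) = p" if "p \<in> {p \<in> A \<times> A. fst p + snd p = c}" for p
      using that by (auto simp: eq_diff_eq')
  qed simp
  then have fibre: "card (A \<inter> (\<lambda>a. c - a) ` A) = card {p \<in> A \<times> A. fst p + snd p = c}" for c
    unfolding inter_reflection_eq by (rule bij_betw_same_card)
  have "(\<Sum>c\<in>UNIV. \<Sum>p\<in>{p \<in> A \<times> A. fst p + snd p = c}. 1) = (\<Sum>p\<in>A \<times> A. 1::nat)"
    by (rule sum.group) auto
  then show ?thesis by (simp add: fibre card_cartesian_product)
qed

lemma even_card_inter_central_reflection_iff:
  fixes A :: "'a::{ab_group_add,finite} set"
  assumes "odd (card (UNIV :: 'a set))"
  shows "even (card (A \<inter> (\<lambda>a. (c + c) - a) ` A)) \<longleftrightarrow> c \<notin> A"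
proof -
  let ?S = "{a \<in> A. (c + c) - a \<in> A}"
  have "(c + c) - x = x \<longleftrightarrow> x = c" for x
  proof
    assume "(c + c) - x = x"
    then have "x + x = c + c" by (metis diff_eq_eq)
    then show "x = c" using inj_double_odd_card_UNIV[OF assms] by (auto dest: injD)
  qed simp
  then have "{x\<in>?S. (c + c) - x = x} = (if c \<in> A then {c} else {})" by auto
  moreover have "even (card ?S) \<longleftrightarrow> even (card {x\<in>?S. (c + c) - x = x})"
    by (rule even_card_iff_even_card_fixpoints) auto
  ultimately show ?thesis unfolding inter_reflection_eq by simp
qed

lemma exists_large_reflection_overlap:
  fixes A :: "'a::{ab_group_add,finite} set"
  assumes odd: "odd (card (UNIV :: 'a set))" and "r \<ge> 2"
    and large: "card (UNIV :: 'a set) \<le> r * card A"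
  shows "\<exists>c. card (UNIV :: 'a set) < r\<^sup>2 * card (A \<inter> (\<lambda>a. c - a) ` A)"
proof (rule ccontr)
  let ?n = "card (UNIV :: 'a set)"
  let ?F = "\<lambda>c. card (A \<inter> (\<lambda>a. c - a) ` A)"
  assume "\<not> ?thesis"
  then have small: "r\<^sup>2 * ?F c \<le> ?n" for c by (simp add: not_less)
  have sum_eq: "(\<Sum>c\<in>UNIV. r\<^sup>2 * ?F c) = (r * card A)\<^sup>2"
    by (simp add: sum_distrib_left[symmetric] sum_card_inter_reflection power2_eq_square)
  have "(r * card A)\<^sup>2 \<le> ?n\<^sup>2"
    using sum_mono[of UNIV "\<lambda>c. r\<^sup>2 * ?F c" "\<lambda>_. ?n"] small sum_eq by (simp add: power2_eq_square)
  moreover have "?n\<^sup>2 \<le> (r * card A)\<^sup>2" using large by (rule power_mono) simp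
  ultimately have squares_eq: "(r * card A)\<^sup>2 = ?n\<^sup>2" by (rule antisym)
  \<comment> \<open>Equality in the averaging bound forces all overlaps to have the same size.\<close>
  have all_equal: "r\<^sup>2 * ?F c = ?n" for c
  proof (rule sum_mono_inv[of "\<lambda>c. r\<^sup>2 * ?F c" UNIV "\<lambda>_. ?n"])
    show "(\<Sum>c\<in>UNIV. r\<^sup>2 * ?F c) = (\<Sum>c\<in>(UNIV :: 'a set). ?n)"
      using sum_eq squares_eq by (simp add: power2_eq_square)
  qed (use small in auto)
  have "?n = r * card A" using squares_eq by simp
  moreover have "?n > 0" by (simp add: card_gt_0_iff)
  ultimately have "0 < card A" "card A < ?n" using \<open>r \<ge> 2\<close> by auto
  then have "A \<noteq> {}" "A \<noteq> UNIV" by auto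
  then obtain a b where "a \<in> A" "b \<notin> A" by blast
  moreover have "?F (a + a) = ?F (b + b)"
    using all_equal[of "a + a"] all_equal[of "b + b"] \<open>r \<ge> 2\<close>
    by (metis mult_left_cancel power_not_zero not_numeral_le_zero)
  ultimately show False using even_card_inter_central_reflection_iff[OF odd, of A] by metis
qed

lemma ms_tilde_gt_inverse_square:
  fixes A :: "'a::{ab_group_add,finite} set"
  assumes "odd (card (UNIV :: 'a set))" and "r \<ge> 2"
    and "card (UNIV :: 'a set) \<le> r * card A"
  shows "1 / real r ^ 2 < ms_tilde A"
proof -
  obtain c where c: "card (UNIV :: 'a set) < r\<^sup>2 * card (A \<inter> (\<lambda>a. c - a) ` A)"
    using exists_large_reflection_overlap[OF assms] by blast
  have "real (card (UNIV :: 'a set)) < real r ^ 2 * real (card (A \<inter> (\<lambda>a. c - a) ` A))"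
    using c unfolding of_nat_less_iff[symmetric, where 'a = real] by simp
  then have "1 / real r ^ 2 < mu (A \<inter> (\<lambda>a. c - a) ` A)"
    using \<open>r \<ge> 2\<close> unfolding mu_def by (simp add: card_gt_0_iff field_simps)
  then show ?thesis unfolding ms_tilde_def by (subst Max_gr_iff) auto
qed

lemma finite_colorings: "finite (colorings r :: ('a::{ab_group_add,finite} \<Rightarrow> nat) set)"
proof -
  have "colorings r = (\<Pi>\<^sub>E x\<in>(UNIV :: 'a set). {..<r})"
    unfolding colorings_def PiE_UNIV_domain by (auto simp: Pi_def)
  then show ?thesis by (simp add: finite_PiE)
qed

lemma exists_large_color_class:
  fixes \<chi> :: "'a::{ab_group_add,finite} \<Rightarrow> nat"
  assumes "\<chi> \<in> colorings r" and "r > 0"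
  shows "\<exists>i<r. card (UNIV :: 'a set) \<le> r * card (\<chi> -` {i})"
proof (rule ccontr)
  let ?n = "card (UNIV :: 'a set)"
  assume "\<not> ?thesis"
  then have small: "r * card (\<chi> -` {i}) < ?n" if "i < r" for i using that by auto
  have "(UNIV :: 'a set) = (\<Union>i<r. \<chi> -` {i})" using assms(1) by (auto simp: colorings_def)
  moreover have "card (\<Union>i<r. \<chi> -` {i}) = (\<Sum>i<r. card (\<chi> -` {i}))"
    by (rule card_UN_disjoint) auto
  ultimately have "?n = (\<Sum>i<r. card (\<chi> -` {i}))" by simp
  then have "r * ?n = (\<Sum>i<r. r * card (\<chi> -` {i}))" by (simp add: sum_distrib_left)
  also have "\<dots> < (\<Sum>i<r. ?n)" by (rule sum_strict_mono) (use assms(2) small in auto)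
  finally show False by simp
qed

theorem theorem7p6:
  fixes r :: nat
  assumes "odd (card (UNIV :: 'a::{ab_group_add,finite} set))"
    and "r \<ge> 2"
  shows "ms_r r TYPE('a) = ms_tilde_r r TYPE('a) \<and> ms_tilde_r r TYPE('a) > 1 / real r ^ 2"
proof
  have "ms = (ms_tilde :: 'a set \<Rightarrow> real)" using ms_eq_ms_tilde[OF assms(1)] ..
  then show "ms_r r TYPE('a) = ms_tilde_r r TYPE('a)" unfolding ms_r_def ms_tilde_r_def by simp
  have "(\<lambda>_. 0) \<in> (colorings r :: ('a \<Rightarrow> nat) set)" using assms(2) by (simp add: colorings_def)
  moreover have "1 / real r ^ 2 < Max ((\<lambda>i. ms_tilde (\<chi> -` {i})) ` {..<r})"
    if \<chi>: "\<chi> \<in> colorings r" for \<chi> :: "'a \<Rightarrow> nat"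
  proof -
    obtain i where "i < r" "card (UNIV :: 'a set) \<le> r * card (\<chi> -` {i})"
      using exists_large_color_class[OF \<chi>] assms(2) by auto
    then show ?thesis using ms_tilde_gt_inverse_square[OF assms] by (subst Max_gr_iff) auto
  qed
  ultimately show "ms_tilde_r r TYPE('a) > 1 / real r ^ 2"
    unfolding ms_tilde_r_def by (subst Min_gr_iff) (auto simp: finite_colorings)
qed

end
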